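(* For every integer $k \geq 2$, there exists a $k$-de Bruijn L-array.
   Context: Fix an integer $k\ge 2$. Consider a $k \times k^2$ array $A$ with entries in $\{0,\dots,k-1\}$, with rows indexed by $i\in\{0,\dots,k-1\}$ and columns by $j\in\{0,\dots,k^2-1\}$, regarded cyclically (row indices taken mod $k$, column indices taken mod $k^2$, i.e. the left side is glued to the right side and the top to the bottom). An L-position is a pair $(i,j)$ with $0\le i\le k-1$, $0\le j\le k^2-1$; the L-filling read at $(i,j)$ is the triple $(a,b,d)=(A(i,j),\,A(i+1 \bmod k,\,j),\,A(i+1 \bmod k,\,j+1 \bmod k^2))$, i.e. a $2\times 2$ block with its upper-right cell removed: $a$ is the upper-left cell, $b$ the cell directly below $a$, and $d$ the cell directly to the right of $b$. There are $k^3$ L-positions and $k^3$ possible triples in $\{0,\dots,k-1\}^3$. The array $A$ is a $k$-de Bruijn L-array if every triple $(a,b,d)\in\{0,\dots,k-1\}^3$ is the L-filling read at exactly one L-position. *)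

theory Defs
  imports Main
begin

text \<open>A k x k^2 array is modelled as a function A :: nat => nat => nat; only the
entries A i j with i < k and j < k^2 matter, and all such entries must lie in {0..<k}.\<close>

definition is_array :: "nat \<Rightarrow> (nat \<Rightarrow> nat \<Rightarrow> nat) \<Rightarrow> bool" where
  "is_array k A \<longleftrightarrow> (\<forall>i<k. \<forall>j<k^2. A i j < k)"

definition L_filling :: "nat \<Rightarrow> (nat \<Rightarrow> nat \<Rightarrow> nat) \<Rightarrow> nat \<times> nat \<Rightarrow> nat \<times> nat \<times> nat" where
  "L_filling k A p = (case p of (i, j) \<Rightarrow>
     (A i j, A ((i + 1) mod k) j, A ((i + 1) mod k) ((j + 1) mod (k^2))))"

definition L_positions :: "nat \<Rightarrow> (nat \<times> nat) set" where
  "L_positions k = {0..<k} \<times> {0..<k^2}"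

definition de_Bruijn_L_array :: "nat \<Rightarrow> (nat \<Rightarrow> nat \<Rightarrow> nat) \<Rightarrow> bool" where
  "de_Bruijn_L_array k A \<longleftrightarrow> is_array k A \<and>
     (\<forall>a<k. \<forall>b<k. \<forall>d<k. \<exists>!p. p \<in> L_positions k \<and> L_filling k A p = (a, b, d))"

end

theory Submission
  imports Defs
begin

text \<open>Write a column index as \<open>j = u * k + v\<close> with digits \<open>u, v < k\<close> and put
  \<open>A i j = (u + i * v) mod k\<close>. If \<open>v < k - 1\<close>, the L read at \<open>(i, j)\<close> is
  \<open>(u + i v, u + (i + 1) v, u + (i + 1) (v + 1))\<close> modulo \<open>k\<close>, so a triple \<open>(a, b, d)\<close> with
  \<open>b - a \<noteq> -1\<close> is read where \<open>v = b - a\<close>, \<open>i + 1 = d - b\<close> and \<open>u = a - i v\<close>. If \<open>v = k - 1\<close>,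
  the lower right cell lies in the next block of columns and the L is
  \<open>(u - i, u - i - 1, u + 1)\<close>, which covers the triples with \<open>b - a = -1\<close>. So every
  triple is read somewhere, and as there are exactly \<open>k\<^sup>3\<close> positions and \<open>k\<^sup>3\<close> triples,
  each is read exactly once. (All arithmetic on entries is modulo \<open>k\<close>.)\<close>

definition linear_L_array :: "nat \<Rightarrow> nat \<Rightarrow> nat \<Rightarrow> nat" where
  "linear_L_array k i j = (j div k + i * (j mod k)) mod k"

lemma mod_add_mult_mod_left: "(u + (x mod k) * y) mod k = (u + x * y) mod (k::nat)"
  by (metis mod_add_right_eq mod_mult_left_eq)

text \<open>Residues are computed from integer representatives such as \<open>b - a\<close>, where
  subtraction on \<^typ>\<open>nat\<close> would truncate.\<close>

lemma mod_add_mult_eq_via_int: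
  fixes u x y c k :: nat and U X Y :: int
  assumes "int u mod int k = U mod int k" and "int x mod int k = X mod int k"
    and "int y mod int k = Y mod int k"
    and "(U + X * Y) mod int k = int c"
  shows "(u + x * y) mod k = c"
proof -
  have "int ((u + x * y) mod k) = (int u + int x * int y) mod int k"
    by (simp add: zmod_int)
  also have "\<dots> = (U + X * Y) mod int k"
    using assms(1-3) by (intro mod_add_cong mod_mult_cong)
  finally show ?thesis using assms(4) by simp
qed

lemma two_digit_less_square:
  fixes u v k :: nat
  assumes "u < k" and "v < k"
  shows "u * k + v < k\<^sup>2"
proof -
  have "u * k + k \<le> k * k"
    using assms(1) by (metis add.commute mult_Suc mult_le_mono1 Suc_leI)
  then show ?thesis using assms(2) by (simp add: power2_eq_square)
qed

lemma is_array_linear_L_array: "0 < k \<Longrightarrow> is_array k (linear_L_array k)"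
  by (simp add: is_array_def linear_L_array_def)

lemma linear_L_array_two_digit:
  "v < k \<Longrightarrow> linear_L_array k i (u * k + v) = (u + i * v) mod k"
  by (simp add: linear_L_array_def)

lemma L_filling_linear_L_array_inner:
  assumes "u < k" and "Suc v < k"
  shows "L_filling k (linear_L_array k) (i, u * k + v) =
    ((u + i * v) mod k, (u + (i + 1) * v) mod k, (u + (i + 1) * (v + 1)) mod k)"
proof -
  have "(u * k + v + 1) mod k\<^sup>2 = u * k + (v + 1)"
    using two_digit_less_square[OF assms] by simp
  then have "L_filling k (linear_L_array k) (i, u * k + v) =
      (linear_L_array k i (u * k + v), linear_L_array k ((i + 1) mod k) (u * k + v),
       linear_L_array k ((i + 1) mod k) (u * k + (v + 1)))"
    by (simp only: L_filling_def prod.case)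
  also have "\<dots> = ((u + i * v) mod k, (u + ((i + 1) mod k) * v) mod k,
      (u + ((i + 1) mod k) * (v + 1)) mod k)"
    using assms by (simp only: linear_L_array_two_digit Suc_lessD Suc_eq_plus1)
  finally show ?thesis by (simp only: mod_add_mult_mod_left)
qed

lemma L_filling_linear_L_array_wrap:
  assumes "u < k"
  shows "L_filling k (linear_L_array k) (i, u * k + (k - 1)) =
    ((u + i * (k - 1)) mod k, (u + (i + 1) * (k - 1)) mod k, (u + 1) mod k)"
proof -
  have "u * k + (k - 1) + 1 = k * (u + 1)" using assms by simp
  then have "(u * k + (k - 1) + 1) mod k\<^sup>2 = ((u + 1) mod k) * k + 0"
    by (simp only: power2_eq_square mod_mult_mult1 mult.commute add_0_right)
  then have "L_filling k (linear_L_array k) (i, u * k + (k - 1)) =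
      (linear_L_array k i (u * k + (k - 1)), linear_L_array k ((i + 1) mod k) (u * k + (k - 1)),
       linear_L_array k ((i + 1) mod k) (((u + 1) mod k) * k + 0))"
    by (simp only: L_filling_def prod.case)
  also have "\<dots> = ((u + i * (k - 1)) mod k, (u + ((i + 1) mod k) * (k - 1)) mod k,
      ((u + 1) mod k + ((i + 1) mod k) * 0) mod k)"
    using assms by (simp only: linear_L_array_two_digit diff_less zero_less_one gr_implies_not0 not_gr0)
  finally show ?thesis by (simp only: mod_add_mult_mod_left mult_0_right add_0_right mod_mod_trivial)
qed

lemma L_filling_linear_L_array_hits_inner:
  fixes a b d v k :: nat
  assumes "a < k" "b < k" "d < k" and "Suc v < k"
    and v: "int v mod int k = (int b - int a) mod int k"
  shows "\<exists>p\<in>L_positions k. L_filling k (linear_L_array k) p = (a, b, d)"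
proof -
  define i where "i = nat ((int d - int b - 1) mod int k)"
  define u where "u = nat ((int a - (int d - int b - 1) * (int b - int a)) mod int k)"
  have k: "int k > 0" using assms by simp
  have i: "int i mod int k = (int d - int b - 1) mod int k"
    and i1: "int (i + 1) mod int k = (int d - int b) mod int k"
    and u: "int u mod int k = (int a - (int d - int b - 1) * (int b - int a)) mod int k"
    using k by (simp_all add: i_def u_def mod_simps)
  have v1: "int (v + 1) mod int k = (int b - int a + 1) mod int k"
    using mod_add_cong[OF v, of 1 1] by (simp add: ac_simps)
  have "(u + i * v) mod k = a"
    using u i v by (rule mod_add_mult_eq_via_int) (use assms in \<open>simp add: algebra_simps\<close>)
  moreover have "(u + (i + 1) * v) mod k = b"
    using u i1 v by (rule mod_add_mult_eq_via_int) (use assms in \<open>simp add: algebra_simps\<close>)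
  moreover have "(u + (i + 1) * (v + 1)) mod k = d"
    using u i1 v1 by (rule mod_add_mult_eq_via_int) (use assms in \<open>simp add: algebra_simps\<close>)
  moreover have "u < k" "i < k"
    using k by (simp_all add: i_def u_def nat_less_iff)
  ultimately have "L_filling k (linear_L_array k) (i, u * k + v) = (a, b, d)"
    using assms(4) by (simp only: L_filling_linear_L_array_inner)
  moreover have "(i, u * k + v) \<in> L_positions k"
    using \<open>u < k\<close> \<open>i < k\<close> assms(4) two_digit_less_square[of u k v] by (simp add: L_positions_def)
  ultimately show ?thesis by blast
qed

lemma L_filling_linear_L_array_hits_wrap:
  fixes a b d k :: nat
  assumes "a < k" "b < k" "d < k"
    and ba: "int b mod int k = (int a - 1) mod int k"
  shows "\<exists>p\<in>L_positions k. L_filling k (linear_L_array k) p = (a, b, d)"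
proof -
  define i where "i = nat ((int d - 1 - int a) mod int k)"
  define u where "u = nat ((int d - 1) mod int k)"
  have k: "int k > 0" using assms by simp
  have i: "int i mod int k = (int d - 1 - int a) mod int k"
    and i1: "int (i + 1) mod int k = (int d - int a) mod int k"
    and u: "int u mod int k = (int d - 1) mod int k"
    and k1: "int (k - 1) mod int k = - 1 mod int k"
    using k by (simp_all add: i_def u_def mod_simps)
  have "(u + i * (k - 1)) mod k = a"
    using u i k1 by (rule mod_add_mult_eq_via_int) (use assms in simp)
  moreover have "(u + (i + 1) * (k - 1)) mod k = b"
    using u i1 k1 by (rule mod_add_mult_eq_via_int) (use assms ba in simp)
  moreover have "(u + 1) mod k = d"
    using mod_add_mult_eq_via_int[OF u, of 1 1 1 1 d] assms by simp
  moreover have "u < k" "i < k"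
    using k by (simp_all add: i_def u_def nat_less_iff)
  ultimately have "L_filling k (linear_L_array k) (i, u * k + (k - 1)) = (a, b, d)"
    by (simp only: L_filling_linear_L_array_wrap)
  moreover have "(i, u * k + (k - 1)) \<in> L_positions k"
    using \<open>u < k\<close> \<open>i < k\<close> two_digit_less_square[of u k "k - 1"] by (simp add: L_positions_def)
  ultimately show ?thesis by blast
qed

lemma L_filling_linear_L_array_surj:
  fixes a b d k :: nat
  assumes "a < k" "b < k" "d < k"
  shows "\<exists>p\<in>L_positions k. L_filling k (linear_L_array k) p = (a, b, d)"
proof -
  define v where "v = nat ((int b - int a) mod int k)"
  have k: "int k > 0" using assms by simp
  have v: "int v = (int b - int a) mod int k" and "v < k"
    using k by (simp_all add: v_def nat_less_iff)
  show ?thesis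
  proof (cases "Suc v < k")
    case True
    moreover have "int v mod int k = (int b - int a) mod int k" by (simp add: v)
    ultimately show ?thesis using assms by (intro L_filling_linear_L_array_hits_inner)
  next
    case False
    with \<open>v < k\<close> have "v = k - 1" by simp
    then have "(int b - int a) mod int k = int k - 1"
      using v k by simp
    then have "int b mod int k = (int a - 1 + int k) mod int k"
      by (metis diff_add_cancel add.commute diff_add_eq mod_add_left_eq)
    then have "int b mod int k = (int a - 1) mod int k" by simp
    then show ?thesis using assms by (intro L_filling_linear_L_array_hits_wrap)
  qed
qed

lemma de_Bruijn_L_array_linear_L_array:
  assumes "0 < k"
  shows "de_Bruijn_L_array k (linear_L_array k)"
proof -
  let ?f = "L_filling k (linear_L_array k)"
  let ?T = "{..<k} \<times> {..<k} \<times> {..<k}"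
  have "?f ` L_positions k \<subseteq> ?T"
    using assms by (auto simp: L_filling_def linear_L_array_def)
  moreover have "?T \<subseteq> ?f ` L_positions k"
  proof (intro subsetI)
    fix t assume "t \<in> ?T"
    then obtain a b d where "t = (a, b, d)" "a < k" "b < k" "d < k" by auto
    then show "t \<in> ?f ` L_positions k"
      using L_filling_linear_L_array_surj[of a k b d] by (metis image_eqI)
  qed
  ultimately have "?f ` L_positions k = ?T" by (rule antisym)
  then have "card (?f ` L_positions k) = card (L_positions k)"
    by (simp add: L_positions_def card_cartesian_product power2_eq_square)
  then have inj: "inj_on ?f (L_positions k)"
    by (simp add: inj_on_iff_eq_card L_positions_def)
  show ?thesis
    unfolding de_Bruijn_L_array_def
  proof (intro conjI is_array_linear_L_array[OF assms] allI impI)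
    fix a b d assume "a < k" "b < k" "d < k"
    then obtain p where "p \<in> L_positions k" "?f p = (a, b, d)"
      using L_filling_linear_L_array_surj by blast
    with inj show "\<exists>!p. p \<in> L_positions k \<and> ?f p = (a, b, d)"
      by (metis inj_onD)
  qed
qed

theorem theorem2:
  fixes k :: nat
  assumes "k \<ge> 2"
  shows "\<exists>A. de_Bruijn_L_array k A"
  using assms de_Bruijn_L_array_linear_L_array[of k] by auto

end
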